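(* For every connected conjunctive query $q$, $\mathbf E[|q(I)|]=n^{1+\chi(q)}$, where the expectation is over a uniformly chosen matching database $I$ over $[n]$.
   Context: A (full, self-join-free) conjunctive query $q(x_1,\ldots,x_k)=S_1(\bar x_1),\ldots,S_\ell(\bar x_\ell)$ has $k$ distinct variables and $\ell$ atoms over distinct relation symbols, $S_j$ of arity $a_j$; $q(I)$ is the set of $\mathbf a\in[n]^k$ such that the projection of $\mathbf a$ onto each atom lies in $S_j$. It is connected if its hypergraph (variables as vertices, hyperedge $\mathrm{vars}(S_j)$ per atom) is connected. $\chi(q)=k+\ell-\sum_ja_j-c$, with $c$ the number of connected components. A matching database over $[n]$: each $S_j$ has exactly $n$ tuples and each of its columns contains each value of $[n]$ exactly once; uniformly chosen means each $S_j$ independently uniform among these. *)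

theory Defs
  imports "HOL-Probability.Probability"
begin

text \<open>A full self-join-free conjunctive query with k variables (named 0..<k) is given by
  a list of atoms; atom j is the list of variables of the relation symbol S_j,
  so its arity is the length of the list (variables may repeat).
  The domain [n] is represented as {0..<n}.\<close>

definition wf_cq :: "nat \<Rightarrow> nat list list \<Rightarrow> bool" where
  "wf_cq k atoms \<longleftrightarrow> (\<forall>xs \<in> set atoms. xs \<noteq> [] \<and> set xs \<subseteq> {..<k})"

definition cq_adj :: "nat list list \<Rightarrow> (nat \<times> nat) set" where
  "cq_adj atoms = {(u, v). \<exists>xs \<in> set atoms. u \<in> set xs \<and> v \<in> set xs}"

definition cq_conn_rel :: "nat \<Rightarrow> nat list list \<Rightarrow> (nat \<times> nat) set" where
  "cq_conn_rel k atoms = (cq_adj atoms)\<^sup>* \<inter> ({..<k} \<times> {..<k})"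

definition num_components :: "nat \<Rightarrow> nat list list \<Rightarrow> nat" where
  "num_components k atoms = card ({..<k} // cq_conn_rel k atoms)"

definition connected_cq :: "nat \<Rightarrow> nat list list \<Rightarrow> bool" where
  "connected_cq k atoms \<longleftrightarrow> k \<ge> 1 \<and> (\<forall>u<k. \<forall>v<k. (u, v) \<in> (cq_adj atoms)\<^sup>*)"

definition chi :: "nat \<Rightarrow> nat list list \<Rightarrow> int" where
  "chi k atoms = int k + int (length atoms) - int (\<Sum>j<length atoms. length (atoms ! j))
                 - int (num_components k atoms)"

definition matching_rel :: "nat \<Rightarrow> nat \<Rightarrow> nat list set \<Rightarrow> bool" where
  "matching_rel n m R \<longleftrightarrow> R \<subseteq> {t. length t = m \<and> set t \<subseteq> {..<n}} \<and> card R = n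
     \<and> (\<forall>i<m. bij_betw (\<lambda>t. t ! i) R {..<n})"

definition matching_dbs :: "nat \<Rightarrow> nat list list \<Rightarrow> (nat \<Rightarrow> nat list set) set" where
  "matching_dbs n atoms = (\<Pi>\<^sub>E j\<in>{..<length atoms}. {R. matching_rel n (length (atoms ! j)) R})"

definition cq_answers :: "nat \<Rightarrow> nat \<Rightarrow> nat list list \<Rightarrow> (nat \<Rightarrow> nat list set) \<Rightarrow> nat list set" where
  "cq_answers n k atoms I = {a. length a = k \<and> set a \<subseteq> {..<n} \<and>
      (\<forall>j<length atoms. map (\<lambda>v. a ! v) (atoms ! j) \<in> I j)}"

end

theory Submission
  imports Defs "HOL-Combinatorics.Transposition"
begin

text \<open>
  For a fixed tuple t of arity m, the coordinatewise transpositions sending t to any other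
  tuple t' permute the matching relations, so t lies in as many matching relations as t' does.
  Double counting pairs (t, R) with t \<in> R, where every matching relation has n tuples, then
  gives \<open>P(t \<in> S\<^sub>j) = n / n^m\<close>. The relations being independent, an assignment of the k
  variables is an answer with probability \<open>\<Prod>\<^sub>j n^(1 - a\<^sub>j)\<close>, and summing over the
  \<open>n^k\<close> assignments yields \<open>n^(k + \<ell> - \<Sigma> a\<^sub>j) = n^(1 + \<chi>(q))\<close> since c = 1.
\<close>

definition tuples :: "nat \<Rightarrow> nat \<Rightarrow> nat list set" where
  "tuples n m = {t. length t = m \<and> set t \<subseteq> {..<n}}"

lemma finite_tuples: "finite (tuples n m)"
  unfolding tuples_def using finite_lists_length_eq[of "{..<n}" m] by (simp add: conj_commute)

lemma card_tuples: "card (tuples n m) = n ^ m"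
  unfolding tuples_def using card_lists_length_eq[of "{..<n}" m] by (simp add: conj_commute)

lemma tuples_nth_less: "t \<in> tuples n m \<Longrightarrow> i < m \<Longrightarrow> t ! i < n"
  by (auto simp: tuples_def dest!: nth_mem[of i t])

definition matching_rels :: "nat \<Rightarrow> nat \<Rightarrow> nat list set set" where
  "matching_rels n m = {R. matching_rel n m R}"

lemma matching_rel_subset_tuples: "matching_rel n m R \<Longrightarrow> R \<subseteq> tuples n m"
  by (auto simp: matching_rel_def tuples_def)

lemma finite_matching_rels: "finite (matching_rels n m)"
proof (rule finite_subset)
  show "matching_rels n m \<subseteq> Pow (tuples n m)"
    by (auto simp: matching_rels_def dest: matching_rel_subset_tuples)
qed (simp add: finite_tuples)

lemma matching_rel_diagonal:
  assumes "m \<ge> 1"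
  shows "matching_rel n m ((\<lambda>i. replicate m i) ` {..<n})"
  unfolding matching_rel_def
proof (intro conjI allI impI)
  have "inj_on (\<lambda>i. replicate m i) {..<n}"
    using assms by (auto simp: inj_on_def)
  then show "card ((\<lambda>i. replicate m i) ` {..<n}) = n"
    by (simp add: card_image)
  fix i assume "i < m"
  then show "bij_betw (\<lambda>t. t ! i) ((\<lambda>i. replicate m i) ` {..<n}) {..<n}"
    by (intro bij_betw_byWitness[where f' = "\<lambda>i. replicate m i"]) auto
qed auto

lemma matching_rels_nonempty: "m \<ge> 1 \<Longrightarrow> matching_rels n m \<noteq> {}"
  using matching_rel_diagonal by (auto simp: matching_rels_def)

definition tuple_transpose :: "nat list \<Rightarrow> nat list \<Rightarrow> nat list \<Rightarrow> nat list" where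
  "tuple_transpose t t' s = map (\<lambda>i. Transposition.transpose (t ! i) (t' ! i) (s ! i)) [0..<length s]"

lemma length_tuple_transpose [simp]: "length (tuple_transpose t t' s) = length s"
  by (simp add: tuple_transpose_def)

lemma nth_tuple_transpose [simp]:
  "i < length s \<Longrightarrow> tuple_transpose t t' s ! i = Transposition.transpose (t ! i) (t' ! i) (s ! i)"
  by (simp add: tuple_transpose_def)

lemma tuple_transpose_involutory [simp]: "tuple_transpose t t' (tuple_transpose t t' s) = s"
  by (rule nth_equalityI) auto

lemma tuple_transpose_first: "length t = length t' \<Longrightarrow> tuple_transpose t t' t = t'"
  by (rule nth_equalityI) auto

lemma tuple_transpose_in_tuples:
  assumes "t \<in> tuples n m" "t' \<in> tuples n m" "s \<in> tuples n m"
  shows "tuple_transpose t t' s \<in> tuples n m"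
  using assms tuples_nth_less[OF assms(1)] tuples_nth_less[OF assms(2)] tuples_nth_less[OF assms(3)]
  by (auto simp: tuples_def in_set_conv_nth Transposition.transpose_def)

lemma matching_rel_tuple_transpose:
  assumes "t \<in> tuples n m" "t' \<in> tuples n m" "matching_rel n m R"
  shows "matching_rel n m (tuple_transpose t t' ` R)"
proof -
  let ?f = "tuple_transpose t t'"
  have R: "R \<subseteq> tuples n m"
    using assms(3) by (rule matching_rel_subset_tuples)
  have inj: "inj_on ?f A" for A
    by (metis inj_on_inverseI tuple_transpose_involutory)
  have "bij_betw (\<lambda>s. s ! i) (?f ` R) {..<n}" if "i < m" for i
  proof -
    let ?\<tau> = "Transposition.transpose (t ! i) (t' ! i)"
    have "(?\<tau> \<circ> (\<lambda>s. s ! i) \<circ> ?f) s = s ! i" if "s \<in> ?f ` R" for s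
    proof -
      obtain r where "r \<in> R" "s = ?f r"
        using \<open>s \<in> ?f ` R\<close> by blast
      moreover have "i < length r"
        using R \<open>r \<in> R\<close> \<open>i < m\<close> by (auto simp: tuples_def)
      ultimately show ?thesis
        by simp
    qed
    moreover have "bij_betw (?\<tau> \<circ> (\<lambda>s. s ! i) \<circ> ?f) (?f ` R) {..<n}"
    proof (intro bij_betw_trans)
      show "bij_betw ?f (?f ` R) R"
        using inj_on_imp_bij_betw[OF inj, of "?f ` R"] by (simp add: image_image)
      show "bij_betw (\<lambda>s. s ! i) R {..<n}"
        using assms(3) that by (simp add: matching_rel_def)
      show "bij_betw ?\<tau> {..<n} {..<n}"
        using tuples_nth_less[OF assms(1) that] tuples_nth_less[OF assms(2) that] by simp
    qed
    ultimately show ?thesis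
      by (rule bij_betw_cong[THEN iffD1])
  qed
  moreover have "?f ` R \<subseteq> tuples n m"
    using R tuple_transpose_in_tuples[OF assms(1,2)] by auto
  moreover have "card (?f ` R) = n"
    using card_image[OF inj] assms(3) by (simp add: matching_rel_def)
  ultimately show ?thesis
    by (simp add: matching_rel_def tuples_def)
qed

lemma tuple_transpose_commute: "tuple_transpose t t' = tuple_transpose t' t"
  by (rule ext) (simp add: tuple_transpose_def transpose_commute)

lemma tuple_transpose_image_containing:
  assumes "t \<in> tuples n m" "t' \<in> tuples n m" "R \<in> matching_rels n m" "t \<in> R"
  shows "tuple_transpose t t' ` R \<in> {R \<in> matching_rels n m. t' \<in> R}"
proof -
  have "t' = tuple_transpose t t' t"
    using assms(1,2) by (simp add: tuples_def tuple_transpose_first)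
  then show ?thesis
    using assms matching_rel_tuple_transpose[OF assms(1,2)] by (auto simp: matching_rels_def)
qed

lemma card_matching_rels_containing_eq:
  assumes "t \<in> tuples n m" "t' \<in> tuples n m"
  shows "card {R \<in> matching_rels n m. t \<in> R} = card {R \<in> matching_rels n m. t' \<in> R}"
proof (rule bij_betw_same_card, rule bij_betw_byWitness)
  show "image (tuple_transpose t t') ` {R \<in> matching_rels n m. t \<in> R} \<subseteq> {R \<in> matching_rels n m. t' \<in> R}"
    using tuple_transpose_image_containing[OF assms] by blast
  show "image (tuple_transpose t t') ` {R \<in> matching_rels n m. t' \<in> R} \<subseteq> {R \<in> matching_rels n m. t \<in> R}"
    using tuple_transpose_image_containing[OF assms(2,1)] by (auto simp: tuple_transpose_commute)
qed (auto simp: image_image)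

lemma card_matching_rels_containing:
  assumes "t \<in> tuples n m"
  shows "n ^ m * card {R \<in> matching_rels n m. t \<in> R} = card (matching_rels n m) * n"
proof -
  let ?M = "matching_rels n m"
  have "(\<Sum>s\<in>tuples n m. card {R \<in> ?M. s \<in> R}) = (\<Sum>R\<in>?M. card {s \<in> tuples n m. s \<in> R})"
    using sum.swap_restrict[OF finite_tuples finite_matching_rels, of "\<lambda>_ _. 1::nat"]
    by simp
  also have "\<dots> = (\<Sum>R\<in>?M. n)"
  proof (rule sum.cong[OF refl])
    fix R assume "R \<in> ?M"
    then have "R \<subseteq> tuples n m" "card R = n"
      by (simp_all add: matching_rels_def matching_rel_subset_tuples matching_rel_def)
    then show "card {s \<in> tuples n m. s \<in> R} = n"
      by (simp add: Collect_conj_eq Int_absorb1)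
  qed
  finally show ?thesis
    using card_matching_rels_containing_eq[OF _ assms] by (simp add: card_tuples)
qed

lemma card_matching_rels_containing_real:
  assumes "t \<in> tuples n m" "n \<ge> 1" "m \<ge> 1"
  shows "real (card {R \<in> matching_rels n m. t \<in> R}) = real (card (matching_rels n m)) / real n ^ (m - 1)"
proof -
  have "real n ^ m = real n * real n ^ (m - 1)"
    using assms(3) by (simp add: power_eq_if)
  with arg_cong[OF card_matching_rels_containing[OF assms(1)], of real] assms(2) show ?thesis
    by (simp add: field_simps)
qed

lemma matching_dbs_eq: "matching_dbs n atoms = (\<Pi>\<^sub>E j\<in>{..<length atoms}. matching_rels n (length (atoms ! j)))"
  by (simp add: matching_dbs_def matching_rels_def)

lemma finite_matching_dbs: "finite (matching_dbs n atoms)"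
  by (simp add: matching_dbs_eq finite_PiE finite_matching_rels)

lemma matching_dbs_nonempty:
  assumes "wf_cq k atoms"
  shows "matching_dbs n atoms \<noteq> {}"
  using assms matching_rels_nonempty
  by (auto simp: matching_dbs_eq PiE_eq_empty_iff wf_cq_def Suc_le_eq)

lemma sum_card_cq_answers:
  "(\<Sum>I\<in>matching_dbs n atoms. card (cq_answers n k atoms I))
   = (\<Sum>a\<in>tuples n k. card {I \<in> matching_dbs n atoms. \<forall>j<length atoms. map ((!) a) (atoms ! j) \<in> I j})"
proof -
  have "cq_answers n k atoms I = {a \<in> tuples n k. \<forall>j<length atoms. map ((!) a) (atoms ! j) \<in> I j}" for I
    by (auto simp: cq_answers_def tuples_def)
  then show ?thesis
    using sum.swap_restrict[OF finite_matching_dbs finite_tuples, of "\<lambda>_ _. 1::nat"] by simp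
qed

lemma card_matching_dbs_containing:
  assumes "wf_cq k atoms" "a \<in> tuples n k" "n \<ge> 1"
  shows "real (card {I \<in> matching_dbs n atoms. \<forall>j<length atoms. map ((!) a) (atoms ! j) \<in> I j})
         = real (card (matching_dbs n atoms)) / real n ^ (\<Sum>j<length atoms. length (atoms ! j) - 1)"
proof -
  let ?m = "\<lambda>j. length (atoms ! j)" and ?a = "\<lambda>j. map ((!) a) (atoms ! j)"
  have m: "?m j \<ge> 1" and a: "?a j \<in> tuples n (?m j)" if "j < length atoms" for j
    using assms(1) nth_mem[OF that] tuples_nth_less[OF assms(2)]
    by (auto simp: wf_cq_def Suc_le_eq tuples_def subset_iff)
  have "{I \<in> matching_dbs n atoms. \<forall>j<length atoms. ?a j \<in> I j}
        = (\<Pi>\<^sub>E j\<in>{..<length atoms}. {R \<in> matching_rels n (?m j). ?a j \<in> R})"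
    by (auto simp: matching_dbs_eq PiE_def Pi_def)
  then have "real (card {I \<in> matching_dbs n atoms. \<forall>j<length atoms. ?a j \<in> I j})
             = (\<Prod>j<length atoms. real (card {R \<in> matching_rels n (?m j). ?a j \<in> R}))"
    by (simp add: card_PiE)
  also have "\<dots> = (\<Prod>j<length atoms. real (card (matching_rels n (?m j))) / real n ^ (?m j - 1))"
    using card_matching_rels_containing_real[OF a assms(3) m] by (intro prod.cong) auto
  also have "\<dots> = real (card (matching_dbs n atoms)) / real n ^ (\<Sum>j<length atoms. ?m j - 1)"
    by (simp add: prod_dividef power_sum matching_dbs_eq card_PiE)
  finally show ?thesis .
qed

lemma num_components_connected:
  assumes "connected_cq k atoms"
  shows "num_components k atoms = 1"
proof -
  have "{..<k} // cq_conn_rel k atoms = (\<Union>x\<in>{..<k}. {{..<k}})"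
    unfolding quotient_def
    using assms by (intro SUP_cong) (auto simp: cq_conn_rel_def connected_cq_def)
  also have "\<dots> = {{..<k}}"
    using assms by (auto simp: connected_cq_def lessThan_empty_iff)
  finally show ?thesis
    by (simp add: num_components_def)
qed

lemma chi_connected:
  assumes "wf_cq k atoms" "connected_cq k atoms"
  shows "1 + chi k atoms = int k - int (\<Sum>j<length atoms. length (atoms ! j) - 1)"
proof -
  have "(\<Sum>j<length atoms. length (atoms ! j)) = (\<Sum>j<length atoms. (length (atoms ! j) - 1) + 1)"
    using assms(1) by (intro sum.cong) (auto simp: wf_cq_def)
  then show ?thesis
    by (simp add: chi_def num_components_connected[OF assms(2)] sum.distrib)
qed

theorem lemma2:
  fixes n k :: nat and atoms :: "nat list list"
  assumes "wf_cq k atoms" and "connected_cq k atoms" and "n \<ge> 1"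
  shows "measure_pmf.expectation (pmf_of_set (matching_dbs n atoms))
           (\<lambda>I. real (card (cq_answers n k atoms I)))
         = real n powi (1 + chi k atoms)"
proof -
  let ?D = "matching_dbs n atoms" and ?S = "\<Sum>j<length atoms. length (atoms ! j) - 1"
  have D: "finite ?D" "?D \<noteq> {}"
    using finite_matching_dbs matching_dbs_nonempty[OF assms(1)] .
  have "measure_pmf.expectation (pmf_of_set ?D) (\<lambda>I. real (card (cq_answers n k atoms I)))
        = real (\<Sum>I\<in>?D. card (cq_answers n k atoms I)) / real (card ?D)"
    using D by (simp add: integral_pmf_of_set)
  also have "\<dots> = (\<Sum>a\<in>tuples n k. real (card ?D) / real n ^ ?S) / real (card ?D)"
    unfolding sum_card_cq_answers of_nat_sum
    using card_matching_dbs_containing[OF assms(1) _ assms(3)] by simp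
  also have "\<dots> = real n ^ k / real n ^ ?S"
    using D by (simp add: card_tuples)
  also have "\<dots> = real n powi (int k - int ?S)"
    using assms(3) by (subst power_int_diff) (simp_all del: of_nat_sum)
  finally show ?thesis
    by (simp only: chi_connected[OF assms(1,2)])
qed

end
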